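(* Let $p_k(x,y)=\frac{1}{\pi}\frac{y}{(x-2\pi k)^2+y^2}$ for $k\in\mathbb{Z}$ and $h(x,y)=\frac{1}{2\pi}\frac{\sinh y}{\cosh y-\cos x}$, for $x\in\mathbb{R}$, $y>0$. For $y>0$ and $n\in\mathbb{Z}\setminus\{0\}$, \[ \int_{-\infty}^\infty h^{-1}(x,y)\,H\nabla p_0(x,y)\cdot\nabla p_n(x,y)\,dx+2\int_{-\infty}^\infty p_n(x,y)\,H\nabla p_0(x,y)\cdot\nabla h^{-1}(x,y)\,dx \] \[ =\frac{\pi n(3y^2-\pi^2n^2)}{(y^2+\pi^2n^2)^3}+\frac{y^2}{\pi n(y^2+\pi^2n^2)\sinh^2 y}. \]
   Context: $\nabla=(\partial_x,\partial_y)$; $H\nabla f=(-\partial_y f,\partial_x f)$ (i.e. $H=\begin{pmatrix}0&-1\\1&0\end{pmatrix}$); $h^{-1}=1/h$; the dot is the Euclidean inner product. *)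

theory Defs
  imports "HOL-Analysis.Analysis"
begin

definition pk :: "int \<Rightarrow> real \<Rightarrow> real \<Rightarrow> real" where
  "pk k x y = (1 / pi) * (y / ((x - 2 * pi * of_int k)^2 + y^2))"

definition hh :: "real \<Rightarrow> real \<Rightarrow> real" where
  "hh x y = (1 / (2 * pi)) * (sinh y / (cosh y - cos x))"

definition hinv :: "real \<Rightarrow> real \<Rightarrow> real" where
  "hinv x y = 1 / hh x y"

definition dx :: "(real \<Rightarrow> real \<Rightarrow> real) \<Rightarrow> real \<Rightarrow> real \<Rightarrow> real" where
  "dx f x y = deriv (\<lambda>t. f t y) x"

definition dy :: "(real \<Rightarrow> real \<Rightarrow> real) \<Rightarrow> real \<Rightarrow> real \<Rightarrow> real" where
  "dy f x y = deriv (\<lambda>t. f x t) y"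

text \<open>(H grad f) . (grad g) with H grad f = (-f_y, f_x).\<close>
definition Hgrad_dot :: "(real \<Rightarrow> real \<Rightarrow> real) \<Rightarrow> (real \<Rightarrow> real \<Rightarrow> real) \<Rightarrow> real \<Rightarrow> real \<Rightarrow> real" where
  "Hgrad_dot f g x y = (- dy f x y) * dx g x y + dx f x y * dy g x y"

end

(*
  The integrands are the real parts, on the real axis, of functions of x that extend
  meromorphically to the whole plane: the Poisson kernels and their partial derivatives are
  rational in x with poles at 2 pi k +- i y, and 1/h(x,y) = 2 pi (cosh y - Re e^(ix)) / sinh y.
  Since |e^(iz)| <= 1 in the closed upper half-plane, the extensions decay at least like |z|^(-2) there, and
  integrating over the boundaries of growing squares shows that each integral is 2 pi i times the
  sum of the residues in the upper half-plane. The combined integrand has double poles at i y and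
  at 2 pi n + i y, and the stated value is the real part of 2 pi i times these two residues.
*)

theory Submission
  imports Defs "HOL-Complex_Analysis.Complex_Analysis" "HOL-Probability.Sinc_Integral"
begin

section \<open>Integrals over the real line as sums of residues\<close>

lemma integrable_lborel_inverse_1_plus_square: "integrable lborel (\<lambda>x::real. inverse (1 + x^2))"
  using integrable_inverse_1_plus_square by (simp add: set_integrable_def einterval_eq_UNIV)

lemma integrable_lborel_if_bounded_inverse_square:
  fixes g :: "real \<Rightarrow> 'a::{banach, second_countable_topology}"
  assumes cont: "continuous_on UNIV g"
    and decay: "\<And>x. \<bar>x\<bar> \<ge> R \<Longrightarrow> norm (g x) \<le> M / x^2"
  shows "integrable lborel g"
proof -
  define R1 where "R1 = max R 1"
  have "compact (g ` {-R1..R1})"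
    by (intro compact_continuous_image continuous_on_subset[OF cont]) auto
  then obtain B where B: "\<And>x. x \<in> {-R1..R1} \<Longrightarrow> norm (g x) \<le> B"
    by (meson bounded_iff compact_imp_bounded imageI)
  have "0 \<in> {-R1..R1}" by (simp add: R1_def)
  hence "B \<ge> 0" using B norm_ge_zero order_trans by blast
  have "R1 > 0" "\<bar>R1\<bar> \<ge> R" by (auto simp: R1_def)
  hence "0 \<le> M / R1^2" using decay norm_ge_zero order_trans by blast
  hence "M \<ge> 0" using \<open>R1 > 0\<close> by (simp add: zero_le_divide_iff)
  define K where "K = B * (1 + R1^2) + 2 * M"
  have bound: "norm (g x) \<le> norm (K * inverse (1 + x^2))" for x
  proof -
    have pos: "1 + x^2 > 0" by (simp add: add_pos_nonneg)
    have "norm (g x) * (1 + x^2) \<le> K"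
    proof (cases "\<bar>x\<bar> \<le> R1")
      case True
      hence "\<bar>x\<bar> \<le> \<bar>R1\<bar>" using R1_def by auto
      hence "x^2 \<le> R1^2" by (simp add: abs_le_square_iff)
      moreover have "norm (g x) \<le> B" using True by (intro B) auto
      ultimately have "norm (g x) * (1 + x^2) \<le> B * (1 + R1^2)"
        using \<open>B \<ge> 0\<close> by (intro mult_mono) auto
      thus ?thesis using \<open>M \<ge> 0\<close> unfolding K_def by linarith
    next
      case False
      hence "\<bar>x\<bar> \<ge> 1" "norm (g x) \<le> M / x^2" using R1_def decay by auto
      hence "x^2 \<ge> 1" "x \<noteq> 0" by (auto simp: abs_le_square_iff[of 1, simplified])
      hence "norm (g x) * x^2 \<le> M"
        using \<open>norm (g x) \<le> M / x^2\<close> by (simp add: pos_le_divide_eq)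
      moreover have "norm (g x) \<le> norm (g x) * x^2"
        using \<open>x^2 \<ge> 1\<close> by (simp add: mult_le_cancel_left1)
      ultimately have "norm (g x) * (1 + x^2) \<le> 2 * M" by (simp add: algebra_simps)
      moreover have "B * (1 + R1^2) \<ge> 0" using \<open>B \<ge> 0\<close> by simp
      ultimately show ?thesis unfolding K_def by linarith
    qed
    moreover have "K \<ge> 0" using \<open>B \<ge> 0\<close> \<open>M \<ge> 0\<close> unfolding K_def by simp
    ultimately show ?thesis using pos by (simp add: field_simps)
  qed
  show ?thesis
  proof (rule Bochner_Integration.integrable_bound[OF _ _ AE_I2[OF bound]])
    show "integrable lborel (\<lambda>x. K * inverse (1 + x^2))"
      using integrable_lborel_inverse_1_plus_square by simp
    show "g \<in> borel_measurable lborel"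
      using cont by (simp add: borel_measurable_continuous_onI)
  qed
qed

lemma norm_contour_integral_linepath_le_inverse_square:
  fixes G :: "complex \<Rightarrow> complex"
  assumes cont: "continuous_on (closed_segment a b) G"
    and "R > 0" "M \<ge> 0"
    and decay: "\<And>z. z \<in> closed_segment a b \<Longrightarrow> norm (G z) \<le> M / (norm z)^2"
    and far: "\<And>z. z \<in> closed_segment a b \<Longrightarrow> norm z \<ge> R"
  shows "norm (contour_integral (linepath a b) G) \<le> M / R^2 * norm (b - a)"
proof (rule contour_integral_bound_linepath)
  show "G contour_integrable_on linepath a b"
    by (rule contour_integrable_continuous_linepath[OF cont])
  show "0 \<le> M / R^2" using \<open>M \<ge> 0\<close> by simp
  fix z assume z: "z \<in> closed_segment a b"
  have "R^2 \<le> (norm z)^2" using far[OF z] \<open>R > 0\<close> by (intro power_mono) auto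
  moreover have "0 < R^2" using \<open>R > 0\<close> by simp
  ultimately have "M / (norm z)^2 \<le> M / R^2" using \<open>M \<ge> 0\<close> by (intro frac_le) auto
  thus "norm (G z) \<le> M / R^2" using decay[OF z] by linarith
qed

lemma path_image_rectpath_upper_disjoint:
  assumes S: "\<And>p. p \<in> S \<Longrightarrow> Im p \<noteq> 0 \<and> norm p < R"
  shows "path_image (rectpath (- of_real R) (Complex R R)) \<inter> S = {}"
proof -
  have "p \<notin> path_image (rectpath (- of_real R) (Complex R R))" if "p \<in> S" for p
  proof -
    have "\<bar>Re p\<bar> < R" "\<bar>Im p\<bar> < R" "Im p \<noteq> 0"
      using S[OF that] abs_Re_le_cmod[of p] abs_Im_le_cmod[of p] by auto
    moreover from this have "path_image (rectpath (- of_real R) (Complex R R))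
        = cbox (- of_real R) (Complex R R) - box (- of_real R) (Complex R R)"
      by (intro path_image_rectpath_cbox_minus_box) auto
    ultimately show ?thesis by (auto simp: in_box_complex_iff in_cbox_complex_iff)
  qed
  thus ?thesis by blast
qed

lemma contour_integral_rectpath_eq_upper_residues:
  fixes G :: "complex \<Rightarrow> complex"
  assumes holo: "G holomorphic_on UNIV - S" and "finite S"
    and S: "\<And>p. p \<in> S \<Longrightarrow> Im p \<noteq> 0 \<and> norm p < R"
  shows "contour_integral (rectpath (- of_real R) (Complex R R)) G
    = 2 * pi * \<i> * (\<Sum>p\<in>{p\<in>S. Im p > 0}. residue G p)"
proof -
  define g where "g = rectpath (- of_real R) (Complex R R)"
  have Sbox: "\<bar>Re p\<bar> < R \<and> \<bar>Im p\<bar> < R \<and> Im p \<noteq> 0" if "p \<in> S" for p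
    using S[OF that] abs_Re_le_cmod[of p] abs_Im_le_cmod[of p] by auto
  have wn: "winding_number g p = (if Im p > 0 then 1 else 0)" if "p \<in> S" for p
  proof (cases "Im p > 0")
    case True
    hence "p \<in> box (- of_real R) (Complex R R)" using Sbox[OF that] by (auto simp: in_box_complex_iff)
    thus ?thesis using True unfolding g_def by (simp add: winding_number_rectpath)
  next
    case False
    hence "p \<notin> cbox (- of_real R) (Complex R R)" using Sbox[OF that] by (auto simp: in_cbox_complex_iff)
    thus ?thesis using False Sbox[OF that] unfolding g_def
      by (subst winding_number_rectpath_outside) auto
  qed
  have "contour_integral g G = 2 * pi * \<i> * (\<Sum>p\<in>S. winding_number g p * residue G p)"
    using path_image_rectpath_upper_disjoint[of S R] S unfolding g_def
    by (intro Residue_theorem[OF open_UNIV connected_UNIV \<open>finite S\<close> holo]) auto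
  also have "(\<Sum>p\<in>S. winding_number g p * residue G p) = (\<Sum>p\<in>S. if Im p > 0 then residue G p else 0)"
    by (intro sum.cong) (auto simp: wn)
  also have "\<dots> = (\<Sum>p\<in>{p\<in>S. Im p > 0}. residue G p)"
    using \<open>finite S\<close> by (simp add: sum.inter_filter)
  finally show ?thesis unfolding g_def .
qed

lemma path_image_rectpath_upper_square:
  "path_image (rectpath (- of_real R) (Complex R R)) = closed_segment (- of_real R) (of_real R)
    \<union> closed_segment (of_real R) (Complex R R) \<union> closed_segment (Complex R R) (Complex (-R) R)
    \<union> closed_segment (Complex (-R) R) (- of_real R)"
  unfolding rectpath_def Let_def by (simp add: path_image_join complex_of_real_def Un_assoc)

lemma contour_integral_rectpath_upper_square:
  fixes G :: "complex \<Rightarrow> complex"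
  assumes cont: "continuous_on (path_image (rectpath (- of_real R) (Complex R R))) G" and "R > 0"
  shows "contour_integral (rectpath (- of_real R) (Complex R R)) G
    = integral {-R..R} (\<lambda>x. G (of_real x)) + contour_integral (linepath (of_real R) (Complex R R)) G
      + contour_integral (linepath (Complex R R) (Complex (-R) R)) G
      + contour_integral (linepath (Complex (-R) R) (- of_real R)) G"
proof -
  define a1 a2 a3 a4 where "a1 = - complex_of_real R" and "a2 = complex_of_real R"
    and "a3 = Complex R R" and "a4 = Complex (-R) R"
  have g: "rectpath a1 a3 = linepath a1 a2 +++ linepath a2 a3 +++ linepath a3 a4 +++ linepath a4 a1"
    unfolding rectpath_def Let_def a1_def a2_def a3_def a4_def by (simp add: complex_of_real_def)
  have "G contour_integrable_on linepath a b" if "(a, b) \<in> {(a1, a2), (a2, a3), (a3, a4), (a4, a1)}" for a b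
    using that cont unfolding path_image_rectpath_upper_square a1_def a2_def a3_def a4_def
    by (intro contour_integrable_continuous_linepath) (auto elim: continuous_on_subset)
  hence "contour_integral (rectpath a1 a3) G = contour_integral (linepath a1 a2) G
      + contour_integral (linepath a2 a3) G + contour_integral (linepath a3 a4) G
      + contour_integral (linepath a4 a1) G"
    unfolding g by (simp add: contour_integral_join contour_integrable_joinI valid_path_join add.assoc)
  moreover have "contour_integral (linepath a1 a2) G = integral {-R..R} (\<lambda>x. G (of_real x))"
    unfolding a1_def a2_def using \<open>R > 0\<close> by (subst contour_integral_linepath_Reals_eq) auto
  ultimately show ?thesis unfolding a1_def a2_def a3_def a4_def by simp
qed

lemma norm_contour_integral_rectpath_minus_integral_le:
  fixes G :: "complex \<Rightarrow> complex"
  assumes cont: "continuous_on (path_image (rectpath (- of_real R) (Complex R R))) G"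
    and R: "R > 0" and "M \<ge> 0"
    and decay: "\<And>z. Im z \<ge> 0 \<Longrightarrow> norm z \<ge> R \<Longrightarrow> norm (G z) \<le> M / (norm z)^2"
  shows "norm (contour_integral (rectpath (- of_real R) (Complex R R)) G
      - integral {-R..R} (\<lambda>x. G (of_real x))) \<le> 4 * M / R"
proof -
  define a2 a3 a4 where "a2 = complex_of_real R" and "a3 = Complex R R" and "a4 = Complex (-R) R"
  have segs: "closed_segment a2 a3 = {z. Re z = R \<and> Im z \<in> {0..R}}"
    "closed_segment a3 a4 = {z. Im z = R \<and> Re z \<in> {-R..R}}"
    "closed_segment a4 (- of_real R) = {z. Re z = -R \<and> Im z \<in> {0..R}}"
    unfolding a2_def a3_def a4_def using R
    by (simp_all add: closed_segment_same_Im closed_segment_same_Re closed_segment_eq_real_ivl)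
  have side: "norm (contour_integral (linepath a b) G) \<le> M / R^2 * norm (b - a)"
    if "(a, b) \<in> {(a2, a3), (a3, a4), (a4, - of_real R)}" for a b
  proof (rule norm_contour_integral_linepath_le_inverse_square[OF _ R \<open>M \<ge> 0\<close>])
    show "continuous_on (closed_segment a b) G"
      using that cont unfolding path_image_rectpath_upper_square a2_def a3_def a4_def
      by (auto elim: continuous_on_subset)
    fix z assume "z \<in> closed_segment a b"
    hence "Im z \<ge> 0 \<and> (\<bar>Re z\<bar> = R \<or> Im z = R)" using that R by (auto simp: segs)
    thus "norm z \<ge> R" using abs_Re_le_cmod[of z] abs_Im_le_cmod[of z] by auto
    thus "norm (G z) \<le> M / (norm z)^2" using \<open>Im z \<ge> 0 \<and> _\<close> by (intro decay) auto
  qed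
  have "norm (a3 - a2) = R" "norm (a4 - a3) = 2 * R" "norm (- of_real R - a4) = R"
    unfolding a2_def a3_def a4_def using R by (simp_all add: cmod_def complex_of_real_def real_sqrt_mult)
  hence "norm (contour_integral (linepath a2 a3) G) + norm (contour_integral (linepath a3 a4) G)
      + norm (contour_integral (linepath a4 (- of_real R)) G) \<le> 4 * M / R"
    using side[of a2 a3] side[of a3 a4] side[of a4 "- of_real R"] R by (simp add: field_simps power2_eq_square)
  moreover have "norm (contour_integral (linepath a2 a3) G + contour_integral (linepath a3 a4) G
      + contour_integral (linepath a4 (- of_real R)) G) \<le> norm (contour_integral (linepath a2 a3) G)
      + norm (contour_integral (linepath a3 a4) G) + norm (contour_integral (linepath a4 (- of_real R)) G)"
    by (rule order_trans[OF norm_triangle_ineq add_right_mono[OF norm_triangle_ineq]])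
  ultimately show ?thesis
    using contour_integral_rectpath_upper_square[OF cont R] unfolding a2_def a3_def a4_def
    by (simp add: algebra_simps)
qed

lemma norm_integral_minus_upper_residues_le:
  fixes G :: "complex \<Rightarrow> complex"
  assumes holo: "G holomorphic_on UNIV - S" and "finite S"
    and S: "\<And>p. p \<in> S \<Longrightarrow> Im p \<noteq> 0 \<and> norm p < r" and "r > 0" "M \<ge> 0"
    and decay: "\<And>z. Im z \<ge> 0 \<Longrightarrow> norm z \<ge> r \<Longrightarrow> norm (G z) \<le> M / (norm z)^2"
  shows "norm (integral {-r..r} (\<lambda>x. G (of_real x))
      - 2 * pi * \<i> * (\<Sum>p\<in>{p\<in>S. Im p > 0}. residue G p)) \<le> 4 * M / r"
proof -
  have "path_image (rectpath (- of_real r) (Complex r r)) \<inter> S = {}"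
    by (intro path_image_rectpath_upper_disjoint S)
  hence "continuous_on (path_image (rectpath (- of_real r) (Complex r r))) G"
    using holomorphic_on_imp_continuous_on[OF holo] by (auto elim: continuous_on_subset)
  thus ?thesis
    using norm_contour_integral_rectpath_minus_integral_le[OF _ \<open>r > 0\<close> \<open>M \<ge> 0\<close> decay]
      contour_integral_rectpath_eq_upper_residues[OF holo \<open>finite S\<close> S]
    by (simp add: norm_minus_commute)
qed

lemma integral_symmetric_interval_tendsto_lborel:
  fixes f :: "real \<Rightarrow> 'a::euclidean_space"
  assumes f: "integrable lborel f"
  shows "(\<lambda>k. integral {- real k..real k} f) \<longlonglongrightarrow> integral\<^sup>L lborel f"
proof -
  have si: "set_integrable lborel A f" if "A \<in> sets lborel" for A
    unfolding set_integrable_def using that f by (rule integrable_mult_indicator)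
  have "(\<lambda>k. set_lebesgue_integral lborel {- real k..real k} f)
      \<longlonglongrightarrow> set_lebesgue_integral lborel (\<Union>k. {- real k..real k}) f"
    by (rule set_integral_cont_up) (auto simp: incseq_def intro!: si)
  moreover have "(\<Union>k. {- real k..real k}) = UNIV"
  proof -
    have "\<exists>k. x \<in> {- real k..real k}" for x
      using real_arch_simple[of "\<bar>x\<bar>"] by (metis abs_le_iff atLeastAtMost_iff minus_le_iff)
    thus ?thesis by blast
  qed
  moreover have "set_lebesgue_integral lborel {- real k..real k} f = integral {- real k..real k} f" for k
    by (rule set_borel_integral_eq_integral(2)[OF si]) simp
  ultimately show ?thesis by (simp add: set_lebesgue_integral_def)
qed

definition at_infinity_upper :: "complex filter" where
  "at_infinity_upper = inf at_infinity (principal {z. Im z \<ge> 0})"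

lemma eventually_at_infinity_upper:
  "eventually P at_infinity_upper \<longleftrightarrow> (\<exists>R. \<forall>z. norm z \<ge> R \<longrightarrow> Im z \<ge> 0 \<longrightarrow> P z)"
  by (auto simp: at_infinity_upper_def eventually_inf_principal eventually_at_infinity)

lemma bigo_at_infinity_upper_inverse_square_E:
  assumes "G \<in> O[at_infinity_upper](\<lambda>z. 1 / z^2)"
  obtains M R where "M \<ge> 0" "\<And>z. Im z \<ge> 0 \<Longrightarrow> norm z \<ge> R \<Longrightarrow> norm (G z) \<le> M / (norm z)^2"
proof -
  obtain M where "M > 0" "eventually (\<lambda>z. norm (G z) \<le> M * norm (1 / z^2)) at_infinity_upper"
    using assms by (elim landau_o.bigE)
  then obtain R where "\<And>z. norm z \<ge> R \<Longrightarrow> Im z \<ge> 0 \<Longrightarrow> norm (G z) \<le> M * norm (1 / z^2)"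
    by (auto simp: eventually_at_infinity_upper)
  thus ?thesis using that[of M R] \<open>M > 0\<close> by (simp add: norm_divide norm_power)
qed

lemma has_bochner_integral_lborel_upper_residues:
  fixes G :: "complex \<Rightarrow> complex"
  assumes holo: "G holomorphic_on UNIV - S" and "finite S" and off_real: "\<And>p. p \<in> S \<Longrightarrow> Im p \<noteq> 0"
    and "G \<in> O[at_infinity_upper](\<lambda>z. 1 / z^2)"
  shows "has_bochner_integral lborel (\<lambda>x. G (of_real x))
    (2 * pi * \<i> * (\<Sum>p\<in>{p\<in>S. Im p > 0}. residue G p))"
proof -
  obtain M R where "M \<ge> 0"
    and decay: "\<And>z. Im z \<ge> 0 \<Longrightarrow> norm z \<ge> R \<Longrightarrow> norm (G z) \<le> M / (norm z)^2"
    using bigo_at_infinity_upper_inverse_square_E[OF assms(4)] by metis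
  define \<Sigma> where "\<Sigma> = 2 * pi * \<i> * (\<Sum>p\<in>{p\<in>S. Im p > 0}. residue G p)"
  define J where "J = (\<lambda>r::real. integral {-r..r} (\<lambda>x. G (of_real x)))"
  have cont: "continuous_on (UNIV - S) G" using holo holomorphic_on_imp_continuous_on by blast
  have cont_real: "continuous_on UNIV (\<lambda>x::real. G (of_real x))"
    by (rule continuous_on_compose2[OF cont]) (auto intro!: continuous_intros dest: off_real)
  have intg: "integrable lborel (\<lambda>x. G (of_real x))"
  proof (rule integrable_lborel_if_bounded_inverse_square[OF cont_real])
    fix x :: real assume "\<bar>x\<bar> \<ge> R"
    thus "norm (G (of_real x)) \<le> M / x^2" using decay[of "of_real x"] by simp
  qed
  obtain Rs where Rs: "\<And>p. p \<in> S \<Longrightarrow> norm p < Rs"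
    using finite_imp_bounded[OF \<open>finite S\<close>] by (meson bounded_iff gt_ex le_less_trans)
  have close: "norm (J r - \<Sigma>) \<le> 4 * M / r" if r: "r \<ge> max R (max 1 Rs)" for r
  proof -
    have "Im p \<noteq> 0 \<and> norm p < r" if "p \<in> S" for p
      using Rs[OF that] off_real[OF that] r by simp
    moreover have "norm (G z) \<le> M / (norm z)^2" if "Im z \<ge> 0" "norm z \<ge> r" for z
      using that r by (intro decay) auto
    moreover have "r > 0" using r by simp
    ultimately show ?thesis unfolding J_def \<Sigma>_def
      using norm_integral_minus_upper_residues_le[OF holo \<open>finite S\<close>, of r M] \<open>M \<ge> 0\<close> by blast
  qed
  have "(\<lambda>k. J (real k) - \<Sigma>) \<longlonglongrightarrow> 0"
  proof (rule Lim_null_comparison)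
    obtain N :: nat where "real N \<ge> max R (max 1 Rs)" using real_arch_simple by blast
    thus "\<forall>\<^sub>F k in sequentially. norm (J (real k) - \<Sigma>) \<le> 4 * M / real k"
      by (intro eventually_sequentiallyI[of N] close) (meson of_nat_le_iff order_trans)
    show "(\<lambda>k. 4 * M / real k) \<longlonglongrightarrow> 0"
      by (intro tendsto_divide_0[OF tendsto_const] filterlim_at_top_imp_at_infinity[OF filterlim_real_sequentially])
  qed
  hence "(\<lambda>k. J (real k)) \<longlonglongrightarrow> \<Sigma>" by (simp add: LIM_zero_iff)
  moreover have "(\<lambda>k. J (real k)) \<longlonglongrightarrow> integral\<^sup>L lborel (\<lambda>x. G (of_real x))"
    unfolding J_def by (rule integral_symmetric_interval_tendsto_lborel[OF intg])
  ultimately have "integral\<^sup>L lborel (\<lambda>x. G (of_real x)) = \<Sigma>" using LIMSEQ_unique by blast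
  thus ?thesis using intg unfolding \<Sigma>_def by (simp add: has_bochner_integral_iff)
qed

section \<open>Holomorphic extensions of the integrands\<close>

definition resolvent :: "complex \<Rightarrow> complex \<Rightarrow> complex" where
  "resolvent a z = 1 / (z - a)"

lemma has_field_derivative_resolvent [derivative_intros]:
  assumes "(f has_field_derivative Df) (at z within T)" "f z \<noteq> a"
  shows "((\<lambda>w. resolvent a (f w)) has_field_derivative (- (resolvent a (f z) ^ 2) * Df)) (at z within T)"
  unfolding resolvent_def using assms
  by (auto intro!: derivative_eq_intros simp: power2_eq_square divide_simps)

lemma holomorphic_on_resolvent [holomorphic_intros]:
  assumes "f holomorphic_on T" "\<And>z. z \<in> T \<Longrightarrow> f z \<noteq> a"
  shows "(\<lambda>w. resolvent a (f w)) holomorphic_on T"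
  unfolding resolvent_def using assms by (auto intro!: holomorphic_intros)

lemma resolvent_bigo: "resolvent a \<in> O[at_infinity_upper](\<lambda>z. 1 / z)"
proof (rule bigoI[of _ 2])
  have "norm (resolvent a z) \<le> 2 * norm (1 / z)" if "norm z \<ge> 2 * norm a + 1" for z
  proof -
    have "norm (z - a) \<ge> norm z / 2" using norm_triangle_ineq2[of z a] that by linarith
    moreover have "norm z > 0" using that norm_ge_zero[of a] by linarith
    ultimately show ?thesis by (simp add: resolvent_def norm_divide divide_simps)
  qed
  thus "eventually (\<lambda>z. norm (resolvent a z) \<le> 2 * norm (1 / z)) at_infinity_upper"
    by (auto simp: eventually_at_infinity_upper)
qed

lemma exp_i_bigo: "(\<lambda>z. exp (\<i> * z)) \<in> O[at_infinity_upper](\<lambda>_. 1)"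
  by (rule bigoI[of _ 1]) (auto simp: eventually_at_infinity_upper norm_exp_eq_Re)

lemma inverse_power_bigo:
  assumes "n \<ge> 2"
  shows "(\<lambda>z. 1 / z ^ n) \<in> O[at_infinity_upper](\<lambda>z::complex. 1 / z^2)"
proof (rule bigoI[of _ 1])
  have "norm (1 / z ^ n) \<le> 1 * norm (1 / z^2)" if "norm z \<ge> 1" for z :: complex
  proof -
    have "norm z ^ 2 \<le> norm z ^ n" using that assms by (intro power_increasing) auto
    moreover have "z \<noteq> 0" using that by auto
    ultimately show ?thesis by (simp add: norm_divide norm_power divide_simps)
  qed
  thus "eventually (\<lambda>z. norm (1 / z ^ n) \<le> 1 * norm (1 / z^2)) at_infinity_upper"
    by (auto simp: eventually_at_infinity_upper)
qed

lemma resolvent_power2_bigo: "(\<lambda>z. resolvent a z ^ 2) \<in> O[at_infinity_upper](\<lambda>z. 1 / z^2)"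
  using landau_o.big_power[OF resolvent_bigo, of a 2] by (simp add: power_one_over)

text \<open>Extensions to complex \<open>x\<close>, for fixed \<open>y\<close>, of the Poisson kernel with centre \<open>c\<close>, of
  \<open>1/h\<close>, and of their partial derivatives.\<close>

definition pk_ext :: "real \<Rightarrow> real \<Rightarrow> complex \<Rightarrow> complex" where
  "pk_ext c y z = (resolvent (of_real c + \<i> * of_real y) z - resolvent (of_real c - \<i> * of_real y) z)
     / (2 * pi * \<i>)"

definition pk_dx_ext :: "real \<Rightarrow> real \<Rightarrow> complex \<Rightarrow> complex" where
  "pk_dx_ext c y z = - \<i> * (resolvent (of_real c - \<i> * of_real y) z ^ 2
     - resolvent (of_real c + \<i> * of_real y) z ^ 2) / (2 * pi)"

definition pk_dy_ext :: "real \<Rightarrow> real \<Rightarrow> complex \<Rightarrow> complex" where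
  "pk_dy_ext c y z = (resolvent (of_real c - \<i> * of_real y) z ^ 2
     + resolvent (of_real c + \<i> * of_real y) z ^ 2) / (2 * pi)"

definition hinv_ext :: "real \<Rightarrow> complex \<Rightarrow> complex" where
  "hinv_ext y z = 2 * pi * (of_real (cosh y) - exp (\<i> * z)) / of_real (sinh y)"

definition hinv_dx_ext :: "real \<Rightarrow> complex \<Rightarrow> complex" where
  "hinv_dx_ext y z = - 2 * pi * \<i> * exp (\<i> * z) / of_real (sinh y)"

definition hinv_dy_ext :: "real \<Rightarrow> complex \<Rightarrow> complex" where
  "hinv_dy_ext y z = 2 * pi * (of_real (cosh y) * exp (\<i> * z) - 1) / of_real (sinh y) ^ 2"

definition hinv_hgrad_pk_ext :: "real \<Rightarrow> real \<Rightarrow> complex \<Rightarrow> complex" where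
  "hinv_hgrad_pk_ext c y z =
     hinv_ext y z * (- pk_dy_ext 0 y z * pk_dx_ext c y z + pk_dx_ext 0 y z * pk_dy_ext c y z)"

definition pk_hgrad_hinv_ext :: "real \<Rightarrow> real \<Rightarrow> complex \<Rightarrow> complex" where
  "pk_hgrad_hinv_ext c y z =
     pk_ext c y z * (- pk_dy_ext 0 y z * hinv_dx_ext y z + pk_dx_ext 0 y z * hinv_dy_ext y z)"

lemma pk_ext_bigo: "pk_ext c y \<in> O[at_infinity_upper](\<lambda>z. 1 / z)"
  unfolding pk_ext_def[abs_def] by (auto intro!: sum_in_bigo resolvent_bigo)

lemma pk_dx_ext_bigo: "pk_dx_ext c y \<in> O[at_infinity_upper](\<lambda>z. 1 / z^2)"
  unfolding pk_dx_ext_def[abs_def] by (auto intro!: sum_in_bigo resolvent_power2_bigo)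

lemma pk_dy_ext_bigo: "pk_dy_ext c y \<in> O[at_infinity_upper](\<lambda>z. 1 / z^2)"
  unfolding pk_dy_ext_def[abs_def] by (auto intro!: sum_in_bigo resolvent_power2_bigo)

lemma hinv_ext_bigo:
  "hinv_ext y \<in> O[at_infinity_upper](\<lambda>_. 1)"
  "hinv_dx_ext y \<in> O[at_infinity_upper](\<lambda>_. 1)"
  "hinv_dy_ext y \<in> O[at_infinity_upper](\<lambda>_. 1)"
  unfolding hinv_ext_def[abs_def] hinv_dx_ext_def[abs_def] hinv_dy_ext_def[abs_def]
  unfolding divide_inverse
  by (intro landau_o.big_1_mult bigo_const sum_in_bigo exp_i_bigo; simp add: exp_i_bigo)+

lemma hinv_hgrad_pk_ext_bigo: "hinv_hgrad_pk_ext c y \<in> O[at_infinity_upper](\<lambda>z. 1 / z^2)"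
proof -
  have "hinv_hgrad_pk_ext c y \<in> O[at_infinity_upper](\<lambda>z. 1 * (1 / z^2 * (1 / z^2)))"
    unfolding hinv_hgrad_pk_ext_def[abs_def]
    by (intro landau_o.big.mult sum_in_bigo hinv_ext_bigo pk_dx_ext_bigo pk_dy_ext_bigo)
      (auto intro: pk_dy_ext_bigo)
  thus ?thesis using inverse_power_bigo[of 4]
    by (auto simp: power_one_over[symmetric] power_add[symmetric] intro: landau_o.big_trans)
qed

lemma pk_hgrad_hinv_ext_bigo: "pk_hgrad_hinv_ext c y \<in> O[at_infinity_upper](\<lambda>z. 1 / z^2)"
proof -
  have "pk_hgrad_hinv_ext c y \<in> O[at_infinity_upper](\<lambda>z. 1 / z * (1 / z^2 * 1))"
    unfolding pk_hgrad_hinv_ext_def[abs_def]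
    by (intro landau_o.big.mult sum_in_bigo hinv_ext_bigo pk_ext_bigo pk_dx_ext_bigo pk_dy_ext_bigo)
      (auto intro: pk_dy_ext_bigo)
  moreover have "(\<lambda>z::complex. 1 / z * (1 / z^2 * 1)) = (\<lambda>z. 1 / z ^ 3)"
    by (simp add: power3_eq_cube power2_eq_square mult.assoc)
  ultimately show ?thesis using inverse_power_bigo[of 3] by (auto intro: landau_o.big_trans)
qed

lemma resolvent_of_real:
  fixes c y x :: real
  assumes "y \<noteq> 0"
  shows "resolvent (of_real c + \<i> * of_real y) (of_real x)
      = (of_real (x - c) + \<i> * of_real y) / of_real ((x - c)^2 + y^2)"
    "resolvent (of_real c - \<i> * of_real y) (of_real x)
      = (of_real (x - c) - \<i> * of_real y) / of_real ((x - c)^2 + y^2)"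
  using assms
  by (simp_all add: resolvent_def complex_eq_iff Re_divide Im_divide power2_eq_square)

lemma pk_ext_of_real:
  assumes "y \<noteq> 0"
  shows "pk_ext c y (of_real x) = of_real ((1 / pi) * (y / ((x - c)^2 + y^2)))"
proof -
  define D where "D = (x - c)^2 + y^2"
  have "D \<noteq> 0" using assms by (simp add: D_def add_nonneg_eq_0_iff)
  thus ?thesis unfolding pk_ext_def resolvent_of_real[OF assms] D_def[symmetric]
    by (simp add: field_simps)
qed

lemma pk_dx_ext_of_real:
  assumes "y \<noteq> 0"
  shows "pk_dx_ext c y (of_real x) = of_real (- (2 / pi) * y * (x - c) / ((x - c)^2 + y^2)^2)"
proof -
  define D where "D = (x - c)^2 + y^2"
  have "D \<noteq> 0" using assms by (simp add: D_def add_nonneg_eq_0_iff)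
  thus ?thesis unfolding pk_dx_ext_def resolvent_of_real[OF assms] D_def[symmetric]
    by (simp add: field_simps) (simp add: algebra_simps power2_eq_square)
qed

lemma pk_dy_ext_of_real:
  assumes "y \<noteq> 0"
  shows "pk_dy_ext c y (of_real x) = of_real ((1 / pi) * ((x - c)^2 - y^2) / ((x - c)^2 + y^2)^2)"
proof -
  define D where "D = (x - c)^2 + y^2"
  have "D \<noteq> 0" using assms by (simp add: D_def add_nonneg_eq_0_iff)
  thus ?thesis unfolding pk_dy_ext_def resolvent_of_real[OF assms] D_def[symmetric]
    by (simp add: field_simps) (simp add: algebra_simps power2_eq_square)
qed

lemma dx_pk:
  assumes "y \<noteq> 0"
  shows "dx (pk k) x y = - (2 / pi) * y * (x - 2 * pi * of_int k) / ((x - 2 * pi * of_int k)^2 + y^2)^2"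
proof -
  have "(x - 2 * pi * of_int k)^2 + y^2 \<noteq> 0" using assms by (simp add: add_nonneg_eq_0_iff)
  thus ?thesis unfolding dx_def pk_def
    by (intro DERIV_imp_deriv) (auto intro!: derivative_eq_intros simp: divide_simps power2_eq_square)
qed

lemma dy_pk:
  assumes "y \<noteq> 0"
  shows "dy (pk k) x y = (1 / pi) * ((x - 2 * pi * of_int k)^2 - y^2) / ((x - 2 * pi * of_int k)^2 + y^2)^2"
proof -
  define u where "u = x - 2 * pi * of_int k"
  have "u^2 + y^2 \<noteq> 0" using assms by (simp add: add_nonneg_eq_0_iff)
  hence "((\<lambda>t. t / (u^2 + t^2)) has_real_derivative (u^2 - y^2) / (u^2 + y^2)^2) (at y)"
    by (auto intro!: derivative_eq_intros simp: divide_simps power2_eq_square algebra_simps)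
  from DERIV_cmult[OF this, of "1 / pi"] show ?thesis
    unfolding dy_def pk_def u_def[symmetric] by (intro DERIV_imp_deriv) simp
qed

lemma hinv_eq: "hinv x y = 2 * pi * (cosh y - cos x) / sinh y"
  unfolding hinv_def hh_def by (simp add: field_simps)

lemma dx_hinv:
  assumes "y \<noteq> 0"
  shows "dx hinv x y = 2 * pi * sin x / sinh y"
  unfolding dx_def hinv_eq using assms by (intro DERIV_imp_deriv) (auto intro!: derivative_eq_intros)

lemma dy_hinv:
  assumes "y \<noteq> 0"
  shows "dy hinv x y = 2 * pi * (cosh y * cos x - 1) / (sinh y)^2"
proof -
  have "sinh y \<noteq> 0" using assms by simp
  hence "((\<lambda>t. 2 * pi * (cosh t - cos x) / sinh t) has_real_derivative
      2 * pi * (sinh y * sinh y - (cosh y - cos x) * cosh y) / (sinh y)^2) (at y)"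
    by (auto intro!: derivative_eq_intros simp: divide_simps power2_eq_square algebra_simps)
  moreover have "sinh y * sinh y - (cosh y - cos x) * cosh y = cosh y * cos x - 1"
    using cosh_square_eq[of y] by (simp add: power2_eq_square algebra_simps)
  ultimately show ?thesis unfolding dy_def hinv_eq by (intro DERIV_imp_deriv) simp
qed

lemma Re_hinv_ext_of_real:
  assumes "y \<noteq> 0"
  shows "Re (hinv_ext y (of_real x)) = hinv x y"
    "Re (hinv_dx_ext y (of_real x)) = dx hinv x y"
    "Re (hinv_dy_ext y (of_real x)) = dy hinv x y"
  using assms unfolding hinv_ext_def hinv_dx_ext_def hinv_dy_ext_def hinv_eq dx_hinv[OF assms] dy_hinv[OF assms]
  by (simp_all add: Re_divide Re_exp Im_exp power2_eq_square)

lemma pk_ext_of_real_eq_derivatives: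
  assumes "y \<noteq> 0"
  shows "pk_ext (2 * pi * of_int k) y (of_real x) = of_real (pk k x y)"
    "pk_dx_ext (2 * pi * of_int k) y (of_real x) = of_real (dx (pk k) x y)"
    "pk_dy_ext (2 * pi * of_int k) y (of_real x) = of_real (dy (pk k) x y)"
  by (simp_all only: pk_ext_of_real[OF assms] pk_dx_ext_of_real[OF assms] pk_dy_ext_of_real[OF assms]
      dx_pk[OF assms] dy_pk[OF assms] pk_def)

lemma Re_hinv_hgrad_pk_ext_of_real:
  assumes "y \<noteq> 0"
  shows "Re (hinv_hgrad_pk_ext (2 * pi * of_int n) y (of_real x)) = hinv x y * Hgrad_dot (pk 0) (pk n) x y"
  using pk_ext_of_real_eq_derivatives[OF assms, of 0] pk_ext_of_real_eq_derivatives[OF assms, of n]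
  unfolding hinv_hgrad_pk_ext_def Hgrad_dot_def Re_hinv_ext_of_real(1)[OF assms, symmetric] by simp

lemma Re_pk_hgrad_hinv_ext_of_real:
  assumes "y \<noteq> 0"
  shows "Re (pk_hgrad_hinv_ext (2 * pi * of_int n) y (of_real x)) = pk n x y * Hgrad_dot (pk 0) hinv x y"
  using pk_ext_of_real_eq_derivatives[OF assms, of 0] pk_ext_of_real_eq_derivatives[OF assms, of n]
  unfolding pk_hgrad_hinv_ext_def Hgrad_dot_def Re_hinv_ext_of_real(2,3)[OF assms, symmetric] by simp

section \<open>Residues of the integrand\<close>

lemma residue_resolvent_square:
  assumes T: "open T" "q \<in> T" and holo: "g holomorphic_on T" "k holomorphic_on T" "h holomorphic_on T"
  shows "residue (\<lambda>z. resolvent q z ^ 2 * g z + resolvent q z * k z + h z) q = deriv g q + k q"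
proof -
  have holo_punctured: "(\<lambda>z. g z / (z - q) ^ Suc 1) holomorphic_on T - {q}"
      "(\<lambda>z. k z / (z - q)) holomorphic_on T - {q}" "h holomorphic_on T - {q}"
    using holo by (auto intro!: holomorphic_intros elim: holomorphic_on_subset)
  have "(\<lambda>z. resolvent q z ^ 2 * g z + resolvent q z * k z + h z)
      = (\<lambda>z. (g z / (z - q) ^ Suc 1 + k z / (z - q)) + h z)"
    by (simp add: resolvent_def power_one_over power2_eq_square)
  hence "residue (\<lambda>z. resolvent q z ^ 2 * g z + resolvent q z * k z + h z) q
      = residue (\<lambda>z. g z / (z - q) ^ Suc 1 + k z / (z - q)) q + residue h q"
    using holo_punctured by (simp add: residue_add[OF T] holomorphic_on_add)
  also have "residue (\<lambda>z. g z / (z - q) ^ Suc 1 + k z / (z - q)) q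
      = residue (\<lambda>z. g z / (z - q) ^ Suc 1) q + residue (\<lambda>z. k z / (z - q)) q"
    by (rule residue_add[OF T holo_punctured(1,2)])
  also have "residue (\<lambda>z. g z / (z - q) ^ Suc 1) q = deriv g q"
    using residue_holomorphic_over_power[OF T holo(1), of 1] by simp
  also have "residue (\<lambda>z. k z / (z - q)) q = k q" by (rule residue_simple[OF T holo(2)])
  also have "residue h q = 0" by (rule residue_holo[OF T holo(3)])
  finally show ?thesis by simp
qed

definition integrand_ext :: "real \<Rightarrow> real \<Rightarrow> complex \<Rightarrow> complex" where
  "integrand_ext c y z = hinv_hgrad_pk_ext c y z + 2 * pk_hgrad_hinv_ext c y z"

definition integrand_poles :: "real \<Rightarrow> real \<Rightarrow> complex set" where
  "integrand_poles c y = {of_real c + \<i> * of_real y, of_real c - \<i> * of_real y, \<i> * of_real y, - \<i> * of_real y}"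

lemma holomorphic_on_integrand_ext:
  "hinv_hgrad_pk_ext c y holomorphic_on UNIV - integrand_poles c y"
  "pk_hgrad_hinv_ext c y holomorphic_on UNIV - integrand_poles c y"
  "integrand_ext c y holomorphic_on UNIV - integrand_poles c y"
  unfolding integrand_ext_def hinv_hgrad_pk_ext_def pk_hgrad_hinv_ext_def
    pk_ext_def pk_dx_ext_def pk_dy_ext_def hinv_ext_def hinv_dx_ext_def hinv_dy_ext_def integrand_poles_def
  by (auto intro!: holomorphic_intros)

lemma cosh_eq_sinh_plus_exp_minus:
  fixes y :: real
  shows "cosh y = sinh y + exp (- y)" "exp (- y) * (2 * sinh y + exp (- y)) = 1"
  by (simp_all add: sinh_def cosh_def exp_minus field_simps)

lemma residue_integrand_ext_at_iy:
  fixes c y :: real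
  assumes "y > 0" "c \<noteq> 0"
  defines "e \<equiv> complex_of_real (exp (- y))" and "s \<equiv> complex_of_real (sinh y)"
    and "d \<equiv> complex_of_real c - 2 * \<i> * complex_of_real y"
  shows "residue (integrand_ext c y) (\<i> * of_real y) = 2 * \<i> / of_real pi * (1 / d)^3
      + e / (of_real pi * s) * (1 / d)^2 - \<i> / (of_real pi * s^2) * (1 / of_real c - 1 / d)"
proof -
  define yi where "yi = \<i> * complex_of_real y"
  define C where "C = complex_of_real (cosh y)"
  define p where "p = complex_of_real pi"
  define cc where "cc = complex_of_real c"
  define g where "g z = \<i> / (p * s) * (C - exp (\<i> * z)) * resolvent (cc - yi) z ^ 2
      + 1 / (p * s) * (resolvent (cc + yi) z - resolvent (cc - yi) z)
        * (exp (\<i> * z) + (C * exp (\<i> * z) - 1) / s)" for z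
  define h where "h z = - (\<i> / (p * s)) * (C - exp (\<i> * z)) * resolvent (- yi) z ^ 2
        * resolvent (cc + yi) z ^ 2
      + 1 / (p * s) * (resolvent (cc + yi) z - resolvent (cc - yi) z)
        * resolvent (- yi) z ^ 2 * (exp (\<i> * z) - (C * exp (\<i> * z) - 1) / s)" for z
  have nonzero: "s \<noteq> 0" "e \<noteq> 0" "d \<noteq> 0" "p \<noteq> 0" "cc \<noteq> 0"
    using assms by (auto simp: s_def e_def d_def p_def cc_def complex_eq_iff)
  have laurent: "integrand_ext c y = (\<lambda>z. resolvent yi z ^ 2 * g z + resolvent yi z * 0 + h z)"
    using \<open>s \<noteq> 0\<close>
    unfolding integrand_ext_def hinv_hgrad_pk_ext_def pk_hgrad_hinv_ext_def g_def h_def p_def cc_def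
      pk_ext_def pk_dx_ext_def pk_dy_ext_def hinv_ext_def hinv_dx_ext_def hinv_dy_ext_def
      yi_def[symmetric] s_def[symmetric] C_def[symmetric]
    by (intro ext) (simp add: field_simps, simp add: algebra_simps power2_eq_square)
  define T where "T = UNIV - {- yi, cc + yi, cc - yi}"
  have poles: "yi \<noteq> - yi" "yi \<noteq> cc + yi" "yi \<noteq> cc - yi" using \<open>cc \<noteq> 0\<close> \<open>d \<noteq> 0\<close> assms(1)
    unfolding yi_def d_def by (auto simp: algebra_simps complex_eq_iff cc_def)
  hence T: "open T" "yi \<in> T" by (auto simp: T_def)
  have "g holomorphic_on T" "h holomorphic_on T" unfolding g_def h_def T_def
    by (auto intro!: holomorphic_intros)
  hence "residue (integrand_ext c y) yi = deriv g yi"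
    using residue_resolvent_square[OF T, where g=g and k="\<lambda>_. 0" and h=h] unfolding laurent by simp
  also have "deriv g yi = 2 * \<i> / p * (1 / d)^3 + e / (p * s) * (1 / d)^2 - \<i> / (p * s^2) * (1 / cc - 1 / d)"
  proof (rule DERIV_imp_deriv)
    have "yi - (cc - yi) = - d" unfolding yi_def d_def cc_def by (simp add: algebra_simps)
    hence resolvents: "resolvent (cc + yi) yi = - 1 / cc" "resolvent (cc - yi) yi = - 1 / d"
      unfolding resolvent_def by simp_all
    have E: "exp (\<i> * yi) = e" unfolding yi_def e_def by (simp flip: exp_of_real)
    have C: "C = s + e" unfolding s_def C_def e_def cosh_eq_sinh_plus_exp_minus(1) by simp
    have rel: "e * (2 * s + e) = 1" unfolding s_def e_def
      using arg_cong[OF cosh_eq_sinh_plus_exp_minus(2), of complex_of_real] by simp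
    show "(g has_field_derivative
        2 * \<i> / p * (1 / d)^3 + e / (p * s) * (1 / d)^2 - \<i> / (p * s^2) * (1 / cc - 1 / d)) (at yi)"
      unfolding g_def
      by (auto intro!: derivative_eq_intros simp: resolvents poles nonzero)
        (use nonzero C rel in
          \<open>simp add: E field_simps power2_eq_square power3_eq_cube, algebra\<close>)
  qed
  finally show ?thesis unfolding yi_def p_def cc_def .
qed

lemma residue_integrand_ext_at_c_iy:
  fixes y :: real and n :: int
  assumes "y > 0" "n \<noteq> 0"
  defines "c \<equiv> 2 * pi * of_int n"
  defines "e \<equiv> complex_of_real (exp (- y))" and "s \<equiv> complex_of_real (sinh y)"
    and "d \<equiv> complex_of_real c + 2 * \<i> * complex_of_real y"
  shows "residue (integrand_ext c y) (of_real c + \<i> * of_real y)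
      = 2 * \<i> / of_real pi * (1 / d)^3 + e / (of_real pi * s) * (1 / d)^2"
proof -
  define yi where "yi = \<i> * complex_of_real y"
  define C where "C = complex_of_real (cosh y)"
  define p where "p = complex_of_real pi"
  define cc where "cc = complex_of_real c"
  define q where "q = cc + yi"
  define k where "k z = 1 / (p * s) * ((resolvent (- yi) z ^ 2 + resolvent yi z ^ 2) * exp (\<i> * z)
      - (resolvent (- yi) z ^ 2 - resolvent yi z ^ 2) * (C * exp (\<i> * z) - 1) / s)" for z
  define g where "g z = - (\<i> / (p * s)) * (C - exp (\<i> * z)) * resolvent (- yi) z ^ 2" for z
  define h where "h z = \<i> / (p * s) * (C - exp (\<i> * z)) * resolvent yi z ^ 2 * resolvent (cc - yi) z ^ 2
      - resolvent (cc - yi) z * k z" for z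
  have nonzero: "s \<noteq> 0" "e \<noteq> 0" "d \<noteq> 0" "p \<noteq> 0" "cc \<noteq> 0"
    using assms by (auto simp: s_def e_def d_def p_def cc_def c_def complex_eq_iff)
  have laurent: "integrand_ext c y = (\<lambda>z. resolvent q z ^ 2 * g z + resolvent q z * k z + h z)"
    using \<open>s \<noteq> 0\<close>
    unfolding integrand_ext_def hinv_hgrad_pk_ext_def pk_hgrad_hinv_ext_def g_def h_def k_def p_def q_def
      cc_def pk_ext_def pk_dx_ext_def pk_dy_ext_def hinv_ext_def hinv_dx_ext_def hinv_dy_ext_def
      yi_def[symmetric] s_def[symmetric] C_def[symmetric]
    by (intro ext) (simp add: field_simps, simp add: algebra_simps power2_eq_square)
  define T where "T = UNIV - {- yi, yi, cc - yi}"
  have poles: "q \<noteq> - yi" "q \<noteq> yi" "q \<noteq> cc - yi" using \<open>cc \<noteq> 0\<close> \<open>d \<noteq> 0\<close> assms(1)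
    unfolding q_def yi_def d_def by (auto simp: algebra_simps complex_eq_iff cc_def)
  hence T: "open T" "q \<in> T" by (auto simp: T_def)
  have "g holomorphic_on T" "k holomorphic_on T" "h holomorphic_on T" unfolding g_def k_def h_def T_def
    by (auto intro!: holomorphic_intros)
  hence "residue (integrand_ext c y) q = deriv g q + k q"
    unfolding laurent by (rule residue_resolvent_square[OF T])
  also have "\<dots> = 2 * \<i> / p * (1 / d)^3 + e / (p * s) * (1 / d)^2"
  proof -
    have "q - - yi = d" "q - yi = cc" unfolding q_def yi_def d_def cc_def by simp_all
    hence resolvents: "resolvent (- yi) q = 1 / d" "resolvent yi q = 1 / cc"
      unfolding resolvent_def by simp_all
    have "\<i> * q = \<i> * (of_int n * (of_real pi * 2)) + (- complex_of_real y)"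
      unfolding q_def cc_def yi_def c_def by (simp add: algebra_simps)
    hence E: "exp (\<i> * q) = e" unfolding e_def by (simp only: exp_add exp_2pi_1_int) (simp flip: exp_of_real)
    have C: "C = s + e" unfolding s_def C_def e_def cosh_eq_sinh_plus_exp_minus(1) by simp
    have rel: "e * (2 * s + e) = 1" unfolding s_def e_def
      using arg_cong[OF cosh_eq_sinh_plus_exp_minus(2), of complex_of_real] by simp
    have "(g has_field_derivative
        - (\<i> / (p * s)) * (- \<i> * e * (1 / d)^2 + (C - e) * (2 * (1 / d) * (- ((1 / d)^2))))) (at q)"
      unfolding g_def
      by (auto intro!: derivative_eq_intros simp: resolvents poles nonzero E) (simp add: algebra_simps)
    hence "deriv g q = - (\<i> / (p * s)) * (- \<i> * e * (1 / d)^2 + (C - e) * (2 * (1 / d) * (- ((1 / d)^2))))"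
      by (rule DERIV_imp_deriv)
    thus ?thesis unfolding k_def resolvents E using nonzero C rel
      by (simp add: field_simps power2_eq_square power3_eq_cube, algebra)
  qed
  finally show ?thesis unfolding q_def yi_def p_def cc_def .
qed

lemma integrand_ext_bigo: "integrand_ext c y \<in> O[at_infinity_upper](\<lambda>z. 1 / z^2)"
  unfolding integrand_ext_def[abs_def]
  by (intro sum_in_bigo hinv_hgrad_pk_ext_bigo) (simp add: pk_hgrad_hinv_ext_bigo)

lemma Re_two_pi_i_residue_sum:
  fixes u v e s c :: real
  assumes "s \<noteq> 0" "c \<noteq> 0"
  defines "w \<equiv> Complex u v"
  shows "Re (2 * of_real pi * \<i> * (2 * \<i> / of_real pi * w^3 + of_real e / (of_real pi * of_real s) * w^2
      - \<i> / (of_real pi * of_real s ^ 2) * (1 / of_real c - w)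
      + (2 * \<i> / of_real pi * cnj w ^ 3 + of_real e / (of_real pi * of_real s) * cnj w ^ 2)))
    = - 8 * (u^3 - 3 * u * v^2) + 2 * (1 / c - u) / s^2"
proof -
  have "2 * of_real pi * \<i> * (2 * \<i> / of_real pi * w^3 + of_real e / (of_real pi * of_real s) * w^2
      - \<i> / (of_real pi * of_real s ^ 2) * (1 / of_real c - w)
      + (2 * \<i> / of_real pi * cnj w ^ 3 + of_real e / (of_real pi * of_real s) * cnj w ^ 2))
    = complex_of_real (- 8 * (u^3 - 3 * u * v^2) + 2 * (1 / c - u) / s^2)
      + \<i> * complex_of_real (4 * e * (u^2 - v^2) / s - 2 * v / s^2)"
    unfolding w_def complex_cnj complex_eq_iff using assms
    by (simp add: field_simps power2_eq_square power3_eq_cube Complex_eq)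
  thus ?thesis by simp
qed

lemma Re_sum_upper_residues_integrand_ext:
  fixes y :: real and n :: int
  assumes "y > 0" "n \<noteq> 0"
  defines "c \<equiv> 2 * pi * of_int n"
  shows "Re (2 * pi * \<i> * (residue (integrand_ext c y) (\<i> * of_real y)
      + residue (integrand_ext c y) (of_real c + \<i> * of_real y)))
    = pi * n * (3 * y^2 - pi^2 * n^2) / (y^2 + pi^2 * n^2)^3
      + y^2 / (pi * n * (y^2 + pi^2 * n^2) * (sinh y)^2)"
proof -
  define m where "m = pi * of_int n"
  define Q where "Q = y^2 + m^2"
  define u where "u = c / (4 * Q)"
  define v where "v = 2 * y / (4 * Q)"
  have "c \<noteq> 0" "m \<noteq> 0" "Q > 0" "sinh y \<noteq> 0" "c = 2 * m"
    using assms by (auto simp: c_def m_def Q_def add_pos_nonneg)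
  have "(complex_of_real c - 2 * \<i> * complex_of_real y) * Complex u v = 1"
    "(complex_of_real c + 2 * \<i> * complex_of_real y) * cnj (Complex u v) = 1"
    using \<open>Q > 0\<close> unfolding u_def v_def \<open>c = 2 * m\<close>
    by (simp_all add: complex_eq_iff field_simps) (simp_all add: Q_def power2_eq_square)
  hence "1 / (complex_of_real c - 2 * \<i> * complex_of_real y) = Complex u v"
    "1 / (complex_of_real c + 2 * \<i> * complex_of_real y) = cnj (Complex u v)"
    by (simp_all add: inverse_eq_divide[symmetric] inverse_unique)
  hence "Re (2 * pi * \<i> * (residue (integrand_ext c y) (\<i> * of_real y)
      + residue (integrand_ext c y) (of_real c + \<i> * of_real y)))
    = - 8 * (u^3 - 3 * u * v^2) + 2 * (1 / c - u) / (sinh y)^2"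
    using residue_integrand_ext_at_iy[OF assms(1) \<open>c \<noteq> 0\<close>]
      residue_integrand_ext_at_c_iy[OF assms(1,2), folded c_def]
      Re_two_pi_i_residue_sum[OF \<open>sinh y \<noteq> 0\<close> \<open>c \<noteq> 0\<close>, of u v "exp (- y)"]
    by (simp add: exp_of_real[symmetric] add_ac)
  also have "\<dots> = m * (3 * y^2 - m^2) / Q^3 + (Q - m^2) / (m * Q * (sinh y)^2)"
    using \<open>m \<noteq> 0\<close> \<open>Q > 0\<close> \<open>sinh y \<noteq> 0\<close> unfolding u_def v_def \<open>c = 2 * m\<close>
    by (simp add: field_simps power2_eq_square power3_eq_cube)
  also have "Q - m^2 = y^2" by (simp add: Q_def)
  finally show ?thesis by (simp add: m_def Q_def power_mult_distrib)
qed

lemma has_bochner_integral_lborel_integrand_poles: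
  fixes c y :: real and G :: "complex \<Rightarrow> complex"
  assumes "y > 0" "c \<noteq> 0"
    and "G holomorphic_on UNIV - integrand_poles c y" "G \<in> O[at_infinity_upper](\<lambda>z. 1 / z^2)"
  shows "has_bochner_integral lborel (\<lambda>x. G (of_real x))
    (2 * pi * \<i> * (residue G (\<i> * of_real y) + residue G (of_real c + \<i> * of_real y)))"
proof -
  have "{p \<in> integrand_poles c y. Im p > 0} = {\<i> * of_real y, of_real c + \<i> * of_real y}"
    "\<i> * of_real y \<noteq> of_real c + \<i> * of_real y"
    using assms(1,2) by (auto simp: integrand_poles_def complex_eq_iff)
  moreover have "finite (integrand_poles c y)" "\<And>p. p \<in> integrand_poles c y \<Longrightarrow> Im p \<noteq> 0"
    using assms(1) by (auto simp: integrand_poles_def)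
  ultimately show ?thesis
    using has_bochner_integral_lborel_upper_residues[OF assms(3) _ _ assms(4)] by simp
qed

lemma integrals_hgrad_ext_eq_residues:
  fixes c y :: real
  assumes "y > 0" "c \<noteq> 0"
  shows "integrable lborel (\<lambda>x. hinv_hgrad_pk_ext c y (of_real x))"
    "integrable lborel (\<lambda>x. pk_hgrad_hinv_ext c y (of_real x))"
    "(\<integral>x. hinv_hgrad_pk_ext c y (of_real x) \<partial>lborel) + 2 * (\<integral>x. pk_hgrad_hinv_ext c y (of_real x) \<partial>lborel)
      = 2 * pi * \<i> * (residue (integrand_ext c y) (\<i> * of_real y)
          + residue (integrand_ext c y) (of_real c + \<i> * of_real y))"
proof -
  note by_residues = has_bochner_integral_lborel_integrand_poles[OF assms]
  show "integrable lborel (\<lambda>x. hinv_hgrad_pk_ext c y (of_real x))"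
    "integrable lborel (\<lambda>x. pk_hgrad_hinv_ext c y (of_real x))"
    using by_residues[OF holomorphic_on_integrand_ext(1) hinv_hgrad_pk_ext_bigo]
      by_residues[OF holomorphic_on_integrand_ext(2) pk_hgrad_hinv_ext_bigo]
    by (simp_all add: has_bochner_integral_iff)
  thus "(\<integral>x. hinv_hgrad_pk_ext c y (of_real x) \<partial>lborel)
      + 2 * (\<integral>x. pk_hgrad_hinv_ext c y (of_real x) \<partial>lborel)
      = 2 * pi * \<i> * (residue (integrand_ext c y) (\<i> * of_real y)
          + residue (integrand_ext c y) (of_real c + \<i> * of_real y))"
    using by_residues[OF holomorphic_on_integrand_ext(3) integrand_ext_bigo]
    unfolding integrand_ext_def has_bochner_integral_iff by simp
qed

theorem lemma3p10:
  fixes y :: real and n :: int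
  assumes "y > 0" and "n \<noteq> 0"
  shows "integrable lborel (\<lambda>x. hinv x y * Hgrad_dot (pk 0) (pk n) x y)
    \<and> integrable lborel (\<lambda>x. pk n x y * Hgrad_dot (pk 0) hinv x y)
    \<and> (\<integral>x. hinv x y * Hgrad_dot (pk 0) (pk n) x y \<partial>lborel)
      + 2 * (\<integral>x. pk n x y * Hgrad_dot (pk 0) hinv x y \<partial>lborel)
      = pi * n * (3 * y^2 - pi^2 * n^2) / (y^2 + pi^2 * n^2)^3
        + y^2 / (pi * n * (y^2 + pi^2 * n^2) * (sinh y)^2)"
proof -
  define c where "c = 2 * pi * of_int n"
  define F1 where "F1 x = hinv_hgrad_pk_ext c y (of_real x)" for x
  define F2 where "F2 x = pk_hgrad_hinv_ext c y (of_real x)" for x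
  have "c \<noteq> 0" using assms by (simp add: c_def)
  note integrals = integrals_hgrad_ext_eq_residues[OF \<open>y > 0\<close> this, folded F1_def F2_def]
  have Re_F: "(\<lambda>x. hinv x y * Hgrad_dot (pk 0) (pk n) x y) = (\<lambda>x. Re (F1 x))"
    "(\<lambda>x. pk n x y * Hgrad_dot (pk 0) hinv x y) = (\<lambda>x. Re (F2 x))"
    using assms unfolding F1_def F2_def c_def
    by (simp_all add: Re_hinv_hgrad_pk_ext_of_real Re_pk_hgrad_hinv_ext_of_real)
  have "Re (integral\<^sup>L lborel F1) + 2 * Re (integral\<^sup>L lborel F2)
      = Re (2 * pi * \<i> * (residue (integrand_ext c y) (\<i> * of_real y)
          + residue (integrand_ext c y) (of_real c + \<i> * of_real y)))"
    by (simp only: integrals(3)[symmetric]) simp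
  also have "\<dots> = pi * n * (3 * y^2 - pi^2 * n^2) / (y^2 + pi^2 * n^2)^3
        + y^2 / (pi * n * (y^2 + pi^2 * n^2) * (sinh y)^2)"
    unfolding c_def by (rule Re_sum_upper_residues_integrand_ext[OF assms])
  finally show ?thesis unfolding Re_F using integrals(1,2) by (simp add: integrable_Re integral_Re)
qed

end
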